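(* Let $(Z_0,\dots,Z_H)$ be a process on an abstract state space with transitions $Z_{j+1}\mid Z_j\sim K_j(\cdot\mid Z_j)$ satisfying $\eta_{\chi^2}(K_j)\le\eta<1$ for all $j$, let $m\in\{0,\dots,H-1\}$, and let $\mathcal{T}$ be the schedule $t_i=\lfloor iH/(m+1)\rfloor$, $i=1,\dots,m$, with inspection outputs $Y_u=g_u(Z_u)$ for $u\in\mathcal{T}\cup\{H\}$. Let $\Delta^2\in(0,\infty)$ and $\epsilon\in(0,1/2)$. Then there exists a step $t^\star\in\{0,\dots,H-1\}$ with next inspection time $u^\star=\min\{u\in\mathcal{T}\cup\{H\}:u>t^\star\}$ such that, for any two hypotheses under which $Z_{t^\star}$ has distributions $P^{(0)}\ll P^{(1)}$ with $\chi^2(P^{(0)}\|P^{(1)})=\Delta^2$ and the kernels $K_j$, $j\ge t^\star$, and $g_{u^\star}$ are common to both, any test based on $n$ i.i.d. samples of $Y_{u^\star}$ with total testing error at most $\epsilon$ requires $$n\ge\frac{(1-\epsilon)^2}{\eta^{\lceil H/(m+1)\rceil}\Delta^2}.$$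
   Context: $\chi^2(P\|Q)=\int(dP/dQ-1)^2dQ$; for a Markov kernel $K$, $\eta_{\chi^2}(K)=\sup\{\chi^2(PK\|QK)/\chi^2(P\|Q):P\ll Q,\ 0<\chi^2(P\|Q)<\infty\}$ with $PK$ the pushforward. The total testing error of a test $\psi$ is $\mathbb{P}_{H_0}(\psi=1)+\mathbb{P}_{H_1}(\psi=0)$. The schedule $t_i=\lfloor iH/(m+1)\rfloor$ is the minimax-optimal (near-uniform) placement of $m$ inspections in $\{1,\dots,H-1\}$. *)

theory Defs
  imports "HOL-Probability.Probability"
begin

definition chi2 :: "'a measure \<Rightarrow> 'a measure \<Rightarrow> ennreal" where
  "chi2 P Q = (\<integral>\<^sup>+ x. ennreal ((enn2real (RN_deriv Q P x) - 1)\<^sup>2) \<partial>Q)"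

definition eta_chi2 :: "'a measure \<Rightarrow> ('a \<Rightarrow> 'a measure) \<Rightarrow> ennreal" where
  "eta_chi2 M K = Sup {chi2 (P \<bind> K) (Q \<bind> K) / chi2 P Q | P Q.
      P \<in> space (prob_algebra M) \<and> Q \<in> space (prob_algebra M) \<and>
      absolutely_continuous Q P \<and> 0 < chi2 P Q \<and> chi2 P Q < \<infinity>}"

text \<open>Distribution of Z_(t+k) when Z_t ~ P, propagating through K t, ..., K (t+k-1).\<close>
fun propagate :: "(nat \<Rightarrow> 'a \<Rightarrow> 'a measure) \<Rightarrow> 'a measure \<Rightarrow> nat \<Rightarrow> nat \<Rightarrow> 'a measure" where
  "propagate K P t 0 = P"
| "propagate K P t (Suc k) = propagate K P t k \<bind> K (t + k)"

definition schedule :: "nat \<Rightarrow> nat \<Rightarrow> nat set" where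
  "schedule H m = {nat \<lfloor>real i * real H / real (m + 1)\<rfloor> | i. i \<in> {1..m}}"

definition next_insp :: "nat \<Rightarrow> nat \<Rightarrow> nat \<Rightarrow> nat" where
  "next_insp H m t = Min {u \<in> schedule H m \<union> {H}. t < u}"

definition total_error :: "nat \<Rightarrow> 'b measure \<Rightarrow> 'b measure \<Rightarrow> ((nat \<Rightarrow> 'b) \<Rightarrow> bool) \<Rightarrow> real" where
  "total_error n Q0 Q1 psi =
     measure (PiM {..<n} (\<lambda>_. Q0)) {x \<in> space (PiM {..<n} (\<lambda>_. Q0)). psi x}
   + measure (PiM {..<n} (\<lambda>_. Q1)) {x \<in> space (PiM {..<n} (\<lambda>_. Q1)). \<not> psi x}"

end

theory Submission
  imports Defs
begin

text \<open>
  Propagating the two hypotheses through \<open>d\<close> kernels contracts their chi-square divergence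
  by \<open>\<eta>\<close> per step, so at an inspection \<open>d\<close> steps later the observed laws are at divergence
  at most \<open>\<eta>\<^sup>d \<Delta>\<^sup>2\<close> (pushing forward through \<open>g\<close> only coarsens a test). A test with total
  error \<open>\<epsilon>\<close> exhibits an event on which the \<open>n\<close>-fold products differ by at least
  \<open>1 - \<epsilon>\<close>; a second-moment bound on the product likelihood ratio turns this into
  \<open>4 (1 - \<epsilon>)\<^sup>2 \<le> (1 + \<chi>\<^sup>2)\<^sup>n - 1 \<le> 2 n \<chi>\<^sup>2\<close> (when \<open>n \<chi>\<^sup>2 \<le> 1\<close>). Finally the \<open>m + 1\<close>
  gaps between consecutive times \<open>0 = t\<^sub>0 \<le> t\<^sub>1 \<le> \<dots> \<le> t\<^bsub>m+1\<^esub> = H\<close> sum to \<open>H\<close>, so one of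
  them has length at least \<open>H / (m + 1)\<close>, and the step at its start waits that long.
\<close>

section \<open>Chi-square divergence and its contraction\<close>

definition likelihood_ratio :: "'a measure \<Rightarrow> 'a measure \<Rightarrow> 'a \<Rightarrow> real" where
  "likelihood_ratio P Q x = enn2real (RN_deriv Q P x)"

lemma chi2_likelihood_ratio:
  "chi2 P Q = (\<integral>\<^sup>+x. ennreal ((likelihood_ratio P Q x - 1)\<^sup>2) \<partial>Q)"
  by (simp add: chi2_def likelihood_ratio_def)

lemma borel_measurable_likelihood_ratio [measurable]: "likelihood_ratio P Q \<in> borel_measurable Q"
  unfolding likelihood_ratio_def by measurable

lemma likelihood_ratio_nonneg: "0 \<le> likelihood_ratio P Q x"
  by (simp add: likelihood_ratio_def)

lemma density_likelihood_ratio: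
  assumes P: "P \<in> space (prob_algebra M)" and Q: "Q \<in> space (prob_algebra M)"
    and ac: "absolutely_continuous Q P"
  shows "P = density Q (\<lambda>x. ennreal (likelihood_ratio P Q x))"
proof -
  interpret Q: prob_space Q using Q by (simp add: space_prob_algebra)
  interpret P: prob_space P using P by (simp add: space_prob_algebra)
  have sets: "sets P = sets Q" using P Q by (simp add: space_prob_algebra)
  have "AE x in Q. RN_deriv Q P x \<noteq> \<infinity>"
    by (rule Q.RN_deriv_finite[OF _ ac sets]) (simp add: P.sigma_finite_measure)
  then have "AE x in Q. RN_deriv Q P x = ennreal (likelihood_ratio P Q x)"
    by eventually_elim (simp add: likelihood_ratio_def less_top)
  then have "density Q (RN_deriv Q P) = density Q (\<lambda>x. ennreal (likelihood_ratio P Q x))"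
    by (rule density_cong[rotated 2]) simp_all
  then show ?thesis using Q.density_RN_deriv[OF ac sets] by simp
qed

lemma likelihood_ratio_moments:
  assumes P: "P \<in> space (prob_algebra M)" and Q: "Q \<in> space (prob_algebra M)"
    and ac: "absolutely_continuous Q P" and fin: "chi2 P Q \<noteq> \<infinity>"
  defines "\<rho> \<equiv> likelihood_ratio P Q"
  shows "integrable Q \<rho>" "integral\<^sup>L Q \<rho> = 1"
    "integrable Q (\<lambda>x. (\<rho> x)\<^sup>2)" "integral\<^sup>L Q (\<lambda>x. (\<rho> x)\<^sup>2) = 1 + enn2real (chi2 P Q)"
proof -
  interpret Q: prob_space Q using Q by (simp add: space_prob_algebra)
  interpret P: prob_space P using P by (simp add: space_prob_algebra)
  have dens: "P = density Q (\<lambda>x. ennreal (\<rho> x))"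
    unfolding \<rho>_def by (rule density_likelihood_ratio[OF P Q ac])
  have [measurable]: "\<rho> \<in> borel_measurable Q" and \<rho>_nonneg: "\<And>x. 0 \<le> \<rho> x"
    by (simp_all add: \<rho>_def likelihood_ratio_nonneg)
  have "(\<integral>\<^sup>+x. ennreal (\<rho> x) \<partial>Q) = emeasure (density Q (\<lambda>x. ennreal (\<rho> x))) (space Q)"
    by (simp add: emeasure_density)
  also have "\<dots> = emeasure P (space P)"
    using dens by simp
  finally have mass: "(\<integral>\<^sup>+x. ennreal (\<rho> x) \<partial>Q) = ennreal 1"
    by (simp add: P.emeasure_space_1)
  show i1: "integrable Q \<rho>"
    by (rule integrableI_nn_integral_finite[OF _ _ mass]) (auto simp: \<rho>_nonneg)
  show e1: "integral\<^sup>L Q \<rho> = 1"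
    by (subst integral_eq_nn_integral) (auto simp: mass \<rho>_nonneg)
  have chi: "(\<integral>\<^sup>+x. ennreal ((\<rho> x - 1)\<^sup>2) \<partial>Q) = ennreal (enn2real (chi2 P Q))"
    using fin by (simp add: chi2_likelihood_ratio \<rho>_def ennreal_enn2real_if)
  have i2: "integrable Q (\<lambda>x. (\<rho> x - 1)\<^sup>2)"
    by (rule integrableI_nn_integral_finite[OF _ _ chi]) auto
  have e2: "integral\<^sup>L Q (\<lambda>x. (\<rho> x - 1)\<^sup>2) = enn2real (chi2 P Q)"
    by (subst integral_eq_nn_integral) (auto simp: chi)
  have sq: "(\<lambda>x. (\<rho> x)\<^sup>2) = (\<lambda>x. (\<rho> x - 1)\<^sup>2 + 2 * \<rho> x - 1)"
    by (auto simp: power2_eq_square algebra_simps)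
  show "integrable Q (\<lambda>x. (\<rho> x)\<^sup>2)"
    unfolding sq using i1 i2 by auto
  show "integral\<^sup>L Q (\<lambda>x. (\<rho> x)\<^sup>2) = 1 + enn2real (chi2 P Q)"
    unfolding sq using i1 i2 e1 e2 by (simp add: Q.prob_space)
qed

lemma chi2_eq_0_imp_eq:
  assumes P: "P \<in> space (prob_algebra M)" and Q: "Q \<in> space (prob_algebra M)"
    and ac: "absolutely_continuous Q P" and chi: "chi2 P Q = 0"
  shows "P = Q"
proof -
  interpret Q: prob_space Q using Q by (simp add: space_prob_algebra)
  have "AE x in Q. ennreal ((likelihood_ratio P Q x - 1)\<^sup>2) = 0"
    using chi unfolding chi2_likelihood_ratio by (subst (asm) nn_integral_0_iff_AE) auto
  then have "AE x in Q. ennreal (likelihood_ratio P Q x) = 1"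
    by eventually_elim auto
  then have "density Q (\<lambda>x. ennreal (likelihood_ratio P Q x)) = density Q (\<lambda>_. 1)"
    by (rule density_cong[rotated 2]) simp_all
  with density_likelihood_ratio[OF P Q ac] show ?thesis
    by (metis density_1)
qed

lemma chi2_self:
  assumes Q: "Q \<in> space (prob_algebra M)"
  shows "chi2 Q Q = 0"
proof -
  interpret Q: prob_space Q using Q by (simp add: space_prob_algebra)
  have "AE x in Q. 1 = RN_deriv Q Q x"
    by (rule Q.RN_deriv_unique) (auto simp: density_1)
  then have "AE x in Q. ennreal ((enn2real (RN_deriv Q Q x) - 1)\<^sup>2) = 0"
    by eventually_elim (metis diff_self enn2real_1 ennreal_0 power_zero_numeral)
  then show ?thesis unfolding chi2_def by (simp add: nn_integral_0_iff_AE)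
qed

lemma bind_in_prob_algebra:
  assumes "P \<in> space (prob_algebra M)" "K \<in> M \<rightarrow>\<^sub>M prob_algebra M"
  shows "P \<bind> K \<in> space (prob_algebra M)"
  using assms by (simp add: space_prob_algebra sets_bind' prob_space_bind')

lemma absolutely_continuous_bind:
  assumes P: "P \<in> space (prob_algebra M)" and Q: "Q \<in> space (prob_algebra M)"
    and ac: "absolutely_continuous Q P" and K: "K \<in> M \<rightarrow>\<^sub>M prob_algebra M"
  shows "absolutely_continuous (Q \<bind> K) (P \<bind> K)"
  unfolding absolutely_continuous_def
proof
  fix A assume "A \<in> null_sets (Q \<bind> K)"
  moreover have "sets (Q \<bind> K) = sets M" "sets (P \<bind> K) = sets M"
    using P Q K by (simp_all add: sets_bind' space_prob_algebra)
  ultimately have A: "A \<in> sets M" and "emeasure (Q \<bind> K) A = 0" "sets (P \<bind> K) = sets M"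
    by auto
  then have "(\<integral>\<^sup>+x. emeasure (K x) A \<partial>Q) = 0"
    using Q K by (simp add: emeasure_bind_prob_algebra)
  moreover have "sets Q = sets M"
    using Q by (simp add: space_prob_algebra)
  then have "(\<lambda>x. emeasure (K x) A) \<in> borel_measurable Q"
    using measurable_compose[OF measurable_prob_algebraD[OF K] measurable_emeasure_subprob_algebra[OF A]]
    by (simp only: measurable_cong_sets[OF \<open>sets Q = sets M\<close> refl])
  ultimately have "AE x in Q. emeasure (K x) A = 0"
    by (simp add: nn_integral_0_iff_AE)
  then have "AE x in P. emeasure (K x) A = 0"
    using P Q by (intro absolutely_continuous_AE[OF _ ac]) (simp_all add: space_prob_algebra)
  then have "(\<integral>\<^sup>+x. emeasure (K x) A \<partial>P) = 0"
    by (subst nn_integral_cong_AE[where v="\<lambda>_. 0"]) auto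
  then show "A \<in> null_sets (P \<bind> K)"
    using P K A \<open>sets (P \<bind> K) = sets M\<close> by (simp add: emeasure_bind_prob_algebra null_sets_def)
qed

lemma chi2_bind_le:
  assumes P: "P \<in> space (prob_algebra M)" and Q: "Q \<in> space (prob_algebra M)"
    and ac: "absolutely_continuous Q P" and fin: "chi2 P Q < \<infinity>"
    and K: "K \<in> M \<rightarrow>\<^sub>M prob_algebra M" and eta: "eta_chi2 M K \<le> ennreal \<eta>"
  shows "chi2 (P \<bind> K) (Q \<bind> K) \<le> ennreal \<eta> * chi2 P Q"
proof (cases "chi2 P Q = 0")
  case True
  \<comment> \<open>excluded from the supremum defining \<open>eta_chi2\<close>, but then \<open>P = Q\<close>\<close>
  then show ?thesis
    using chi2_eq_0_imp_eq[OF P Q ac] chi2_self[OF bind_in_prob_algebra[OF Q K]] by simp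
next
  case False
  then have "chi2 (P \<bind> K) (Q \<bind> K) / chi2 P Q \<le> eta_chi2 M K"
    unfolding eta_chi2_def using P Q ac fin
    by (intro Sup_upper) (auto simp: zero_less_iff_neq_zero)
  then have "chi2 (P \<bind> K) (Q \<bind> K) / chi2 P Q * chi2 P Q \<le> ennreal \<eta> * chi2 P Q"
    using eta by (intro mult_right_mono) auto
  then show ?thesis
    using False fin by (simp add: ennreal_divide_times)
qed

lemma propagate_in_prob_algebra:
  assumes "\<And>j. j \<in> {t..<t + k} \<Longrightarrow> K j \<in> M \<rightarrow>\<^sub>M prob_algebra M"
    and "P \<in> space (prob_algebra M)"
  shows "propagate K P t k \<in> space (prob_algebra M)"
  using assms by (induction k) (auto intro: bind_in_prob_algebra)

lemma absolutely_continuous_propagate: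
  assumes K: "\<And>j. j \<in> {t..<t + k} \<Longrightarrow> K j \<in> M \<rightarrow>\<^sub>M prob_algebra M"
    and P: "P \<in> space (prob_algebra M)" and Q: "Q \<in> space (prob_algebra M)"
    and ac: "absolutely_continuous Q P"
  shows "absolutely_continuous (propagate K Q t k) (propagate K P t k)"
  using K
proof (induction k)
  case (Suc k)
  then show ?case
    using P Q by (auto intro!: absolutely_continuous_bind propagate_in_prob_algebra)
qed (simp add: ac)

lemma chi2_propagate_le:
  assumes K: "\<And>j. j \<in> {t..<t + k} \<Longrightarrow> K j \<in> M \<rightarrow>\<^sub>M prob_algebra M"
    and eta: "\<And>j. j \<in> {t..<t + k} \<Longrightarrow> eta_chi2 M (K j) \<le> ennreal \<eta>"
    and P: "P \<in> space (prob_algebra M)" and Q: "Q \<in> space (prob_algebra M)"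
    and ac: "absolutely_continuous Q P" and fin: "chi2 P Q < \<infinity>"
  shows "chi2 (propagate K P t k) (propagate K Q t k) \<le> ennreal \<eta> ^ k * chi2 P Q"
  using K eta
proof (induction k)
  case (Suc k)
  then have IH: "chi2 (propagate K P t k) (propagate K Q t k) \<le> ennreal \<eta> ^ k * chi2 P Q"
    by simp
  also have "\<dots> < \<infinity>"
    using fin by (simp add: ennreal_mult_less_top power_less_top_ennreal)
  finally have "chi2 (propagate K P t (Suc k)) (propagate K Q t (Suc k))
      \<le> ennreal \<eta> * chi2 (propagate K P t k) (propagate K Q t k)"
    using Suc.prems P Q ac
    by (auto intro!: chi2_bind_le absolutely_continuous_propagate propagate_in_prob_algebra)
  also have "\<dots> \<le> ennreal \<eta> ^ Suc k * chi2 P Q"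
    using IH by (auto simp: mult.assoc intro: mult_left_mono)
  finally show ?case .
qed simp

section \<open>Testing from i.i.d. samples\<close>

lemma mult_le_weighted_squares:
  fixes x y s :: real
  assumes "0 < s"
  shows "x * y \<le> s / 2 * x\<^sup>2 + y\<^sup>2 / (2 * s)"
proof -
  have "0 \<le> (s * x - y)\<^sup>2 / (2 * s)" using assms by simp
  also have "\<dots> = s / 2 * x\<^sup>2 + y\<^sup>2 / (2 * s) - x * y"
    using assms by (simp add: field_simps power2_eq_square)
  finally show ?thesis by simp
qed

lemma integral_mult_le_weighted_squares:
  fixes u v :: "'a \<Rightarrow> real"
  assumes "integrable Q (\<lambda>x. u x * v x)" "integrable Q (\<lambda>x. (u x)\<^sup>2)" "integrable Q (\<lambda>x. (v x)\<^sup>2)"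
    and s: "0 < s"
  shows "(\<integral>x. u x * v x \<partial>Q) \<le> s / 2 * (\<integral>x. (u x)\<^sup>2 \<partial>Q) + (\<integral>x. (v x)\<^sup>2 \<partial>Q) / (2 * s)"
proof -
  have "(\<integral>x. u x * v x \<partial>Q) \<le> (\<integral>x. s / 2 * (u x)\<^sup>2 + (v x)\<^sup>2 / (2 * s) \<partial>Q)"
    using assms by (intro integral_mono mult_le_weighted_squares) auto
  also have "\<dots> = s / 2 * (\<integral>x. (u x)\<^sup>2 \<partial>Q) + (\<integral>x. (v x)\<^sup>2 \<partial>Q) / (2 * s)"
    using assms by simp
  finally show ?thesis .
qed

lemma event_gap_le_second_moment:
  fixes F :: "'a \<Rightarrow> real"
  assumes Q: "prob_space Q" and F: "integrable Q F" "integrable Q (\<lambda>x. (F x)\<^sup>2)"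
    and F1: "integral\<^sup>L Q F = 1" and B: "B \<in> sets Q"
    and gap: "0 < (\<integral>x. F x * indicator B x \<partial>Q) - measure Q B"
  shows "4 * ((\<integral>x. F x * indicator B x \<partial>Q) - measure Q B)\<^sup>2 \<le> (\<integral>x. (F x)\<^sup>2 \<partial>Q) - 1"
proof -
  interpret Q: prob_space Q by (rule Q)
  define a where "a = (\<integral>x. F x * indicator B x \<partial>Q) - measure Q B"
  define q where "q = measure Q B"
  define X where "X = (\<integral>x. (F x)\<^sup>2 \<partial>Q)"
  have BQ: "B \<inter> space Q = B"
    using B by (simp add: Int_absorb2 sets.sets_into_space)
  have iB: "integrable Q (indicator B :: _ \<Rightarrow> real)"
    using B by (simp add: Q.emeasure_eq_measure)
  have iFB: "integrable Q (\<lambda>x. F x * indicator B x)"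
    using integrable_real_mult_indicator[OF B F(1)] by (simp add: mult.commute)
  have cov_eq: "(\<lambda>x. (indicator B x - q) * (F x - 1))
      = (\<lambda>x. F x * indicator B x - q * F x - indicator B x + q)"
    by (auto simp: algebra_simps)
  have varB_eq: "(\<lambda>x. (indicator B x - q)\<^sup>2) = (\<lambda>x. (1 - 2 * q) * indicator B x + q\<^sup>2)"
    by (auto simp: indicator_def power2_eq_square algebra_simps)
  have varF_eq: "(\<lambda>x. (F x - 1)\<^sup>2) = (\<lambda>x. (F x)\<^sup>2 - 2 * F x + 1)"
    by (auto simp: power2_eq_square algebra_simps)
  have icov: "integrable Q (\<lambda>x. (indicator B x - q) * (F x - 1))"
    unfolding cov_eq using iFB F iB by simp
  have ivarB: "integrable Q (\<lambda>x. (indicator B x - q)\<^sup>2)"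
    unfolding varB_eq using iB by simp
  have ivarF: "integrable Q (\<lambda>x. (F x - 1)\<^sup>2)"
    unfolding varF_eq using F by simp
  have cov: "(\<integral>x. (indicator B x - q) * (F x - 1) \<partial>Q) = a"
    unfolding cov_eq using iFB F iB by (simp add: F1 BQ Q.prob_space a_def q_def)
  have varB: "(\<integral>x. (indicator B x - q)\<^sup>2 \<partial>Q) = q * (1 - q)"
    unfolding varB_eq using iB by (simp add: BQ q_def Q.prob_space power2_eq_square algebra_simps)
  have varF: "(\<integral>x. (F x - 1)\<^sup>2 \<partial>Q) = X - 1"
    unfolding varF_eq using F by (simp add: F1 Q.prob_space X_def)
  have a_pos: "0 < a"
    using gap by (simp add: a_def)
  have "q * (1 - q) \<le> 1 / 4"
    using zero_le_power2[of "q - 1 / 2"] by (simp add: power2_eq_square algebra_simps)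
  then have "2 * a * (q * (1 - q)) \<le> a / 2"
    using a_pos by simp
  \<comment> \<open>weighted AM-GM on the covariance of \<open>F\<close> and the indicator, with the optimal weight \<open>4 * a\<close>\<close>
  moreover have "a \<le> 2 * a * (q * (1 - q)) + (X - 1) / (8 * a)"
    using integral_mult_le_weighted_squares[OF icov ivarB ivarF, of "4 * a"] a_pos
    by (simp only: cov varB varF) simp
  ultimately have "a / 2 \<le> (X - 1) / (8 * a)"
    by linarith
  then have "a / 2 * (8 * a) \<le> X - 1"
    using a_pos by (simp add: pos_le_divide_eq)
  then have "4 * a\<^sup>2 \<le> X - 1"
    by (simp add: power2_eq_square)
  then show ?thesis
    by (simp only: a_def X_def)
qed

lemma PiM_density:
  fixes f :: "'a \<Rightarrow> ennreal"
  assumes I: "finite I" and Q: "sigma_finite_measure Q" and f[measurable]: "f \<in> borel_measurable Q"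
    and Qf: "sigma_finite_measure (density Q f)"
  shows "PiM I (\<lambda>_. density Q f) = density (PiM I (\<lambda>_. Q)) (\<lambda>x. \<Prod>i\<in>I. f (x i))"
proof -
  interpret PQ: product_sigma_finite "\<lambda>_. Q"
    unfolding product_sigma_finite_def using Q by blast
  interpret PQf: product_sigma_finite "\<lambda>_. density Q f"
    unfolding product_sigma_finite_def using Qf by blast
  have "density (PiM I (\<lambda>_. Q)) (\<lambda>x. \<Prod>i\<in>I. f (x i)) = PiM I (\<lambda>_. density Q f)"
  proof (rule PQf.PiM_eqI[OF I])
    show "sets (density (PiM I (\<lambda>_. Q)) (\<lambda>x. \<Prod>i\<in>I. f (x i))) = sets (PiM I (\<lambda>_. density Q f))"
      unfolding sets_density by (rule sets_PiM_cong) simp_all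
  next
    fix A assume "\<And>i. i \<in> I \<Longrightarrow> A i \<in> sets (density Q f)"
    then have A: "\<And>i. i \<in> I \<Longrightarrow> A i \<in> sets Q" by simp
    then have PE: "Pi\<^sub>E I A \<in> sets (PiM I (\<lambda>_. Q))"
      using I by (intro sets_PiM_I_finite) auto
    have "emeasure (density (PiM I (\<lambda>_. Q)) (\<lambda>x. \<Prod>i\<in>I. f (x i))) (Pi\<^sub>E I A)
        = (\<integral>\<^sup>+x. (\<Prod>i\<in>I. f (x i)) * indicator (Pi\<^sub>E I A) x \<partial>PiM I (\<lambda>_. Q))"
      using PE by (simp add: emeasure_density)
    also have "\<dots> = (\<integral>\<^sup>+x. (\<Prod>i\<in>I. f (x i) * indicator (A i) (x i)) \<partial>PiM I (\<lambda>_. Q))"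
    proof (rule nn_integral_cong)
      fix x assume "x \<in> space (PiM I (\<lambda>_. Q))"
      then have "x \<in> extensional I" by (simp add: space_PiM PiE_def)
      then have "indicator (Pi\<^sub>E I A) x = (\<Prod>i\<in>I. indicator (A i) (x i) :: ennreal)"
        using I by (auto simp: indicator_def PiE_def Pi_def prod_ennreal intro: prod_zero)
      then show "(\<Prod>i\<in>I. f (x i)) * indicator (Pi\<^sub>E I A) x = (\<Prod>i\<in>I. f (x i) * indicator (A i) (x i))"
        by (simp add: prod.distrib)
    qed
    also have "\<dots> = (\<Prod>i\<in>I. \<integral>\<^sup>+x. f x * indicator (A i) x \<partial>Q)"
      using A I by (intro PQ.product_nn_integral_prod) auto
    also have "\<dots> = (\<Prod>i\<in>I. emeasure (density Q f) (A i))"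
      using A by (intro prod.cong refl) (simp add: emeasure_density)
    finally show "emeasure (density (PiM I (\<lambda>_. Q)) (\<lambda>x. \<Prod>i\<in>I. f (x i))) (Pi\<^sub>E I A)
        = (\<Prod>i\<in>I. emeasure (density Q f) (A i))" .
  qed
  then show ?thesis by simp
qed

lemma PiM_likelihood_ratio:
  fixes n :: nat
  assumes P: "P \<in> space (prob_algebra M)" and Q: "Q \<in> space (prob_algebra M)"
    and ac: "absolutely_continuous Q P" and fin: "chi2 P Q \<noteq> \<infinity>"
  defines "F \<equiv> \<lambda>x. \<Prod>i<n. likelihood_ratio P Q (x i)"
  shows "PiM {..<n} (\<lambda>_. P) = density (PiM {..<n} (\<lambda>_. Q)) (\<lambda>x. ennreal (F x))"
    and "integrable (PiM {..<n} (\<lambda>_. Q)) F" "integral\<^sup>L (PiM {..<n} (\<lambda>_. Q)) F = 1"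
    and "integrable (PiM {..<n} (\<lambda>_. Q)) (\<lambda>x. (F x)\<^sup>2)"
    and "integral\<^sup>L (PiM {..<n} (\<lambda>_. Q)) (\<lambda>x. (F x)\<^sup>2) = (1 + enn2real (chi2 P Q)) ^ n"
proof -
  interpret Q: prob_space Q using Q by (simp add: space_prob_algebra)
  interpret P: prob_space P using P by (simp add: space_prob_algebra)
  interpret PQ: product_sigma_finite "\<lambda>_. Q"
    unfolding product_sigma_finite_def using Q.sigma_finite_measure by blast
  define \<rho> where "\<rho> = likelihood_ratio P Q"
  have F_eq: "F = (\<lambda>x. \<Prod>i<n. \<rho> (x i))"
    by (simp add: F_def \<rho>_def)
  note moments = likelihood_ratio_moments[OF P Q ac fin, folded \<rho>_def]
  have [measurable]: "\<rho> \<in> borel_measurable Q" and \<rho>_nonneg: "\<And>x. 0 \<le> \<rho> x"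
    by (simp_all add: \<rho>_def likelihood_ratio_nonneg)
  have dens: "P = density Q (\<lambda>x. ennreal (\<rho> x))"
    unfolding \<rho>_def by (rule density_likelihood_ratio[OF P Q ac])
  have "PiM {..<n} (\<lambda>_. P) = PiM {..<n} (\<lambda>_. density Q (\<lambda>x. ennreal (\<rho> x)))"
    using dens by simp
  also have "\<dots> = density (PiM {..<n} (\<lambda>_. Q)) (\<lambda>x. \<Prod>i<n. ennreal (\<rho> (x i)))"
    using dens P.sigma_finite_measure by (intro PiM_density Q.sigma_finite_measure) auto
  finally show "PiM {..<n} (\<lambda>_. P) = density (PiM {..<n} (\<lambda>_. Q)) (\<lambda>x. ennreal (F x))"
    by (simp add: F_eq prod_ennreal \<rho>_nonneg)
  show "integrable (PiM {..<n} (\<lambda>_. Q)) F" "integral\<^sup>L (PiM {..<n} (\<lambda>_. Q)) F = 1"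
    unfolding F_eq using moments
    by (auto intro!: PQ.product_integrable_prod[where f="\<lambda>_. \<rho>"]
        simp: PQ.product_integral_prod[where f="\<lambda>_. \<rho>"])
  have F2: "(\<lambda>x. (F x)\<^sup>2) = (\<lambda>x. \<Prod>i<n. (\<rho> (x i))\<^sup>2)"
    by (simp add: F_eq prod_power_distrib)
  show "integrable (PiM {..<n} (\<lambda>_. Q)) (\<lambda>x. (F x)\<^sup>2)"
    "integral\<^sup>L (PiM {..<n} (\<lambda>_. Q)) (\<lambda>x. (F x)\<^sup>2) = (1 + enn2real (chi2 P Q)) ^ n"
    unfolding F2 using moments
    by (auto intro!: PQ.product_integrable_prod[where f="\<lambda>_ x. (\<rho> x)\<^sup>2"]
        simp: PQ.product_integral_prod[where f="\<lambda>_ x. (\<rho> x)\<^sup>2"])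
qed

lemma total_error_chi2_lower_bound:
  fixes psi :: "(nat \<Rightarrow> 'a) \<Rightarrow> bool"
  assumes P: "P \<in> space (prob_algebra M)" and Q: "Q \<in> space (prob_algebra M)"
    and ac: "absolutely_continuous Q P" and fin: "chi2 P Q \<noteq> \<infinity>"
    and psi: "psi \<in> PiM {..<n} (\<lambda>_. M) \<rightarrow>\<^sub>M count_space UNIV"
    and err: "total_error n P Q psi \<le> \<epsilon>" and eps: "\<epsilon> < 1"
  shows "4 * (1 - \<epsilon>)\<^sup>2 \<le> (1 + enn2real (chi2 P Q)) ^ n - 1"
proof -
  define Qn where "Qn = PiM {..<n} (\<lambda>_. Q)"
  define Pn where "Pn = PiM {..<n} (\<lambda>_. P)"
  define F where "F x = (\<Prod>i<n. likelihood_ratio P Q (x i))" for x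
  note F = PiM_likelihood_ratio[OF P Q ac fin, where n=n, folded F_def Qn_def Pn_def]
  interpret Qn: prob_space Qn
    unfolding Qn_def using Q by (intro prob_space_PiM) (simp add: space_prob_algebra)
  interpret Pn: prob_space Pn
    unfolding Pn_def using P by (intro prob_space_PiM) (simp add: space_prob_algebra)
  have sets_Pn: "sets Pn = sets (PiM {..<n} (\<lambda>_. M))" and sets_Qn: "sets Qn = sets (PiM {..<n} (\<lambda>_. M))"
    using P Q unfolding Pn_def Qn_def by (auto intro!: sets_PiM_cong simp: space_prob_algebra)
  then have space_Pn: "space Pn = space Qn"
    by (metis sets_eq_imp_space_eq)
  define B where "B = {x \<in> space Qn. \<not> psi x}"
  have "psi \<in> Qn \<rightarrow>\<^sub>M count_space UNIV"
    unfolding measurable_cong_sets[OF sets_Qn refl] by (rule psi)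
  then have B: "B \<in> sets Qn"
    unfolding B_def by measurable
  have [measurable]: "F \<in> borel_measurable Qn"
    unfolding F_def[abs_def] Qn_def by measurable
  have "measure Pn B = (\<integral>x. indicator B x \<partial>Pn)"
    using B sets_Pn sets_Qn by simp
  also have "\<dots> = (\<integral>x. F x * indicator B x \<partial>Qn)"
    unfolding F(1) using B
    by (subst integral_density) (auto simp: F_def prod_nonneg likelihood_ratio_nonneg)
  finally have "measure Pn B = (\<integral>x. F x * indicator B x \<partial>Qn)" .
  moreover have "1 - measure Pn B + measure Qn B \<le> \<epsilon>"
  proof -
    have "{x \<in> space Pn. psi x} = space Pn - B"
      unfolding B_def space_Pn by auto
    then show ?thesis
      using err B sets_Pn sets_Qn Pn.prob_compl[of B]
      by (simp add: total_error_def Pn_def[symmetric] Qn_def[symmetric] B_def[symmetric])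
  qed
  ultimately have gap: "1 - \<epsilon> \<le> (\<integral>x. F x * indicator B x \<partial>Qn) - measure Qn B"
    by linarith
  then have "4 * ((\<integral>x. F x * indicator B x \<partial>Qn) - measure Qn B)\<^sup>2 \<le> (1 + enn2real (chi2 P Q)) ^ n - 1"
    using event_gap_le_second_moment[OF Qn.prob_space_axioms F(2,4,3) B] F(5) eps by simp
  moreover have "(1 - \<epsilon>)\<^sup>2 \<le> ((\<integral>x. F x * indicator B x \<partial>Qn) - measure Qn B)\<^sup>2"
    using gap eps by (intro power_mono) auto
  ultimately show ?thesis by linarith
qed

lemma measure_PiM_distr_Collect:
  fixes T :: "(nat \<Rightarrow> 'b) \<Rightarrow> bool"
  assumes I: "finite I" and P: "prob_space P" and g: "g \<in> P \<rightarrow>\<^sub>M N"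
    and T: "T \<in> PiM I (\<lambda>_. N) \<rightarrow>\<^sub>M count_space UNIV"
  shows "measure (PiM I (\<lambda>_. distr P N g)) {x \<in> space (PiM I (\<lambda>_. distr P N g)). T x}
       = measure (PiM I (\<lambda>_. P)) {x \<in> space (PiM I (\<lambda>_. P)). T (compose I g x)}"
proof -
  define Pg where "Pg = distr P N g"
  have Pg: "prob_space Pg"
    unfolding Pg_def using P g by (rule prob_space.prob_space_distr)
  have sets_Pg: "sets Pg = sets N"
    by (simp add: Pg_def)
  have g_Pg[measurable]: "g \<in> P \<rightarrow>\<^sub>M Pg"
    unfolding measurable_cong_sets[OF refl sets_Pg] by (rule g)
  have "distr P Pg g = Pg"
    unfolding Pg_def by (rule distr_cong) simp_all
  then have PiM_Pg: "PiM I (\<lambda>_. Pg) = distr (PiM I (\<lambda>_. P)) (PiM I (\<lambda>_. Pg)) (compose I g)"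
    using distr_PiM_finite_prob_space'[OF I P Pg g_Pg] by simp
  have compose_g[measurable]: "compose I g \<in> PiM I (\<lambda>_. P) \<rightarrow>\<^sub>M PiM I (\<lambda>_. Pg)"
    unfolding compose_def by measurable
  have sets_PiM_Pg: "sets (PiM I (\<lambda>_. Pg)) = sets (PiM I (\<lambda>_. N))"
    by (intro sets_PiM_cong) (simp_all add: sets_Pg)
  have T_Pg: "T \<in> PiM I (\<lambda>_. Pg) \<rightarrow>\<^sub>M count_space UNIV"
    unfolding measurable_cong_sets[OF sets_PiM_Pg refl] by (rule T)
  define S where "S = {x \<in> space (PiM I (\<lambda>_. Pg)). T x}"
  have S: "S \<in> sets (PiM I (\<lambda>_. Pg))"
    unfolding S_def using T_Pg by measurable
  have "measure (PiM I (\<lambda>_. Pg)) S = measure (distr (PiM I (\<lambda>_. P)) (PiM I (\<lambda>_. Pg)) (compose I g)) S"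
    by (metis PiM_Pg)
  also have "\<dots> = measure (PiM I (\<lambda>_. P)) (compose I g -` S \<inter> space (PiM I (\<lambda>_. P)))"
    by (rule measure_distr[OF compose_g S])
  also have "compose I g -` S \<inter> space (PiM I (\<lambda>_. P)) = {x \<in> space (PiM I (\<lambda>_. P)). T (compose I g x)}"
    using measurable_space[OF compose_g] by (auto simp: S_def)
  finally show ?thesis
    by (simp add: S_def Pg_def)
qed

lemma total_error_distr:
  assumes P: "prob_space P" and Q: "prob_space Q" and sets: "sets P = sets M" "sets Q = sets M"
    and g: "g \<in> M \<rightarrow>\<^sub>M N" and psi: "psi \<in> PiM {..<n} (\<lambda>_. N) \<rightarrow>\<^sub>M count_space UNIV"
  shows "total_error n (distr P N g) (distr Q N g) psi = total_error n P Q (\<lambda>x. psi (compose {..<n} g x))"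
proof -
  have "g \<in> P \<rightarrow>\<^sub>M N" "g \<in> Q \<rightarrow>\<^sub>M N"
    unfolding measurable_cong_sets[OF sets(1) refl] measurable_cong_sets[OF sets(2) refl] by (rule g)+
  moreover have "(\<lambda>x. \<not> psi x) \<in> PiM {..<n} (\<lambda>_. N) \<rightarrow>\<^sub>M count_space UNIV"
    using psi by measurable
  ultimately show ?thesis
    unfolding total_error_def using P Q psi by (simp add: measure_PiM_distr_Collect)
qed

lemma measurable_compose_test:
  assumes g: "g \<in> M \<rightarrow>\<^sub>M N" and psi: "psi \<in> PiM I (\<lambda>_. N) \<rightarrow>\<^sub>M count_space UNIV"
  shows "(\<lambda>x. psi (compose I g x)) \<in> PiM I (\<lambda>_. M) \<rightarrow>\<^sub>M count_space UNIV"
proof -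
  have "compose I g \<in> PiM I (\<lambda>_. M) \<rightarrow>\<^sub>M PiM I (\<lambda>_. N)"
    using g unfolding compose_def by measurable
  then show ?thesis
    using psi by measurable
qed

lemma power_one_plus_le:
  fixes c :: real
  assumes c: "0 \<le> c" and small: "real n * c \<le> 1"
  shows "(1 + c) ^ n \<le> 1 + 2 * (real n * c)"
proof -
  have "(1 + c) ^ n \<le> exp c ^ n"
    using c by (intro power_mono) (auto simp: exp_ge_add_one_self)
  also have "\<dots> = exp (real n * c)"
    by (simp add: exp_of_nat_mult)
  also have "\<dots> \<le> 1 + real n * c + (real n * c)\<^sup>2"
    using c small by (intro exp_bound) auto
  finally have "(1 + c) ^ n \<le> 1 + real n * c + (real n * c)\<^sup>2" .
  moreover have "(real n * c)\<^sup>2 \<le> real n * c"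
    using c small by (simp add: power2_eq_square mult_left_le_one_le)
  ultimately show ?thesis by linarith
qed

lemma chi2_sample_size_lower_bound:
  assumes P: "P \<in> space (prob_algebra M)" and Q: "Q \<in> space (prob_algebra M)"
    and ac: "absolutely_continuous Q P" and fin: "chi2 P Q \<noteq> \<infinity>"
    and g: "g \<in> M \<rightarrow>\<^sub>M N" and psi: "psi \<in> PiM {..<n} (\<lambda>_. N) \<rightarrow>\<^sub>M count_space UNIV"
    and err: "total_error n (distr P N g) (distr Q N g) psi \<le> \<epsilon>" and eps: "\<epsilon> < 1"
  shows "(1 - \<epsilon>)\<^sup>2 \<le> real n * enn2real (chi2 P Q)"
proof -
  define c where "c = enn2real (chi2 P Q)"
  have c: "0 \<le> c" by (simp add: c_def)
  have "0 \<le> \<epsilon>"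
    using err unfolding total_error_def by (meson add_nonneg_nonneg measure_nonneg order_trans)
  then have eps_sq: "(1 - \<epsilon>)\<^sup>2 \<le> 1"
    using eps by (simp add: power_le_one)
  have "total_error n P Q (\<lambda>x. psi (compose {..<n} g x)) \<le> \<epsilon>"
    using err P Q g psi by (simp add: total_error_distr space_prob_algebra)
  then have bound: "4 * (1 - \<epsilon>)\<^sup>2 \<le> (1 + c) ^ n - 1"
    unfolding c_def
    by (rule total_error_chi2_lower_bound[OF P Q ac fin measurable_compose_test[OF g psi] _ eps])
  have "(1 - \<epsilon>)\<^sup>2 \<le> real n * c"
  proof (cases "real n * c \<le> 1")
    case True
    then show ?thesis
      using bound power_one_plus_le[OF c True] mult_nonneg_nonneg[OF of_nat_0_le_iff[of n] c] by linarith
  next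
    case False
    then show ?thesis
      using eps_sq by linarith
  qed
  then show ?thesis
    by (simp add: c_def)
qed

section \<open>The inspection schedule\<close>

definition inspection_time :: "nat \<Rightarrow> nat \<Rightarrow> nat \<Rightarrow> nat" where
  "inspection_time H m i = nat \<lfloor>real i * real H / real (m + 1)\<rfloor>"

lemma inspection_time_mono: "i \<le> j \<Longrightarrow> inspection_time H m i \<le> inspection_time H m j"
  unfolding inspection_time_def
  by (intro nat_mono floor_mono divide_right_mono mult_right_mono) auto

lemma inspection_time_0 [simp]: "inspection_time H m 0 = 0"
  by (simp add: inspection_time_def)

lemma inspection_time_last [simp]: "inspection_time H m (Suc m) = H"
  unfolding inspection_time_def by (simp del: of_nat_Suc add: of_nat_Suc[symmetric])

lemma inspection_time_le: "i \<le> Suc m \<Longrightarrow> inspection_time H m i \<le> H"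
  using inspection_time_mono[of i "Suc m" H m] by simp

lemma schedule_eq_image: "schedule H m = inspection_time H m ` {1..m}"
  unfolding schedule_def inspection_time_def by auto

lemma exists_increment_ge_average:
  fixes f :: "nat \<Rightarrow> real"
  shows "\<exists>i\<le>m. (f (Suc m) - f 0) / real (Suc m) \<le> f (Suc i) - f i"
proof (rule ccontr)
  assume "\<not> ?thesis"
  then have "\<And>i. i \<in> {..<Suc m} \<Longrightarrow> f (Suc i) - f i < (f (Suc m) - f 0) / real (Suc m)"
    by (metis lessThan_iff less_Suc_eq_le not_le)
  then have "(\<Sum>i<Suc m. f (Suc i) - f i) < (\<Sum>i<Suc m. (f (Suc m) - f 0) / real (Suc m))"
    by (intro sum_strict_mono) auto
  then show False
    by (simp add: sum_lessThan_telescope)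
qed

lemma next_insp_le:
  assumes "u \<in> schedule H m \<union> {H}" and "t < u"
  shows "next_insp H m t \<le> u"
  unfolding next_insp_def using assms by (intro Min_le) (auto simp: schedule_eq_image)

lemma next_insp_mem:
  assumes "t < H"
  shows "next_insp H m t \<in> {u \<in> schedule H m \<union> {H}. t < u}"
  unfolding next_insp_def using assms by (intro Min_in) (auto simp: schedule_eq_image)

lemma schedule_Un_end: "schedule H m \<union> {H} = inspection_time H m ` {1..Suc m}"
  by (simp add: schedule_eq_image atLeastAtMostSuc_conv)

lemma inspection_time_Suc_le_next_insp:
  assumes i: "i \<le> m" and gap: "inspection_time H m i < inspection_time H m (Suc i)"
  shows "inspection_time H m (Suc i) \<le> next_insp H m (inspection_time H m i)"
proof -
  have "inspection_time H m i < H"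
    using gap inspection_time_le[of "Suc i" m H] i by simp
  then have "next_insp H m (inspection_time H m i) \<in> inspection_time H m ` {1..Suc m}"
    and lt: "inspection_time H m i < next_insp H m (inspection_time H m i)"
    using next_insp_mem[of "inspection_time H m i" H m] unfolding schedule_Un_end by simp_all
  then obtain j where j: "next_insp H m (inspection_time H m i) = inspection_time H m j"
    by blast
  have "\<not> j \<le> i"
    using lt inspection_time_mono[of j i H m] unfolding j by linarith
  then show ?thesis
    unfolding j by (intro inspection_time_mono) simp
qed

lemma exists_long_wait_for_inspection:
  assumes m: "m < H"
  shows "\<exists>t<H. t < next_insp H m t \<and> next_insp H m t \<in> schedule H m \<union> {H}
    \<and> nat \<lceil>real H / real (m + 1)\<rceil> \<le> next_insp H m t - t"
proof -
  obtain i where i: "i \<le> m"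
    and gap: "real H / real (m + 1) \<le> real (inspection_time H m (Suc i)) - real (inspection_time H m i)"
    using exists_increment_ge_average[where f="\<lambda>i. real (inspection_time H m i)" and m=m] by auto
  define t where "t = inspection_time H m i"
  have "0 < real H / real (m + 1)"
    using m by simp
  then have lt: "t < inspection_time H m (Suc i)"
    using gap unfolding t_def by linarith
  then have "t < H"
    using inspection_time_le[of "Suc i" m H] i by simp
  moreover have "nat \<lceil>real H / real (m + 1)\<rceil> \<le> next_insp H m t - t"
    using gap lt inspection_time_Suc_le_next_insp[OF i lt[unfolded t_def]]
    unfolding t_def by (simp add: nat_le_iff ceiling_le_iff of_nat_diff)
  ultimately show ?thesis
    using next_insp_mem[of t H m] by auto
qed

section \<open>Sample complexity at a delayed inspection\<close>

lemma propagated_sample_size_lower_bound: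
  assumes K: "\<And>j. j \<in> {t..<t + d} \<Longrightarrow> K j \<in> M \<rightarrow>\<^sub>M prob_algebra M"
    and eta: "\<And>j. j \<in> {t..<t + d} \<Longrightarrow> eta_chi2 M (K j) \<le> ennreal \<eta>" and eta_nonneg: "0 \<le> \<eta>"
    and P0: "P0 \<in> space (prob_algebra M)" and P1: "P1 \<in> space (prob_algebra M)"
    and ac: "absolutely_continuous P1 P0" and chi: "chi2 P0 P1 = ennreal \<Delta>2" and Delta: "0 \<le> \<Delta>2"
    and g: "g \<in> M \<rightarrow>\<^sub>M N" and psi: "psi \<in> PiM {..<n} (\<lambda>_. N) \<rightarrow>\<^sub>M count_space UNIV"
    and err: "total_error n (distr (propagate K P0 t d) N g) (distr (propagate K P1 t d) N g) psi \<le> \<epsilon>"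
    and eps: "\<epsilon> < 1"
  shows "(1 - \<epsilon>)\<^sup>2 \<le> real n * \<eta> ^ d * \<Delta>2"
proof -
  have "chi2 (propagate K P0 t d) (propagate K P1 t d) \<le> ennreal \<eta> ^ d * chi2 P0 P1"
    using chi by (intro chi2_propagate_le[OF K eta P0 P1 ac]) auto
  also have "\<dots> = ennreal (\<eta> ^ d * \<Delta>2)"
    using eta_nonneg Delta by (simp add: chi ennreal_power ennreal_mult)
  finally have chi_d: "chi2 (propagate K P0 t d) (propagate K P1 t d) \<le> ennreal (\<eta> ^ d * \<Delta>2)" .
  then have "chi2 (propagate K P0 t d) (propagate K P1 t d) \<noteq> \<infinity>"
    by (auto simp: top_unique)
  then have "(1 - \<epsilon>)\<^sup>2 \<le> real n * enn2real (chi2 (propagate K P0 t d) (propagate K P1 t d))"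
    using propagate_in_prob_algebra[OF K P0] propagate_in_prob_algebra[OF K P1]
      absolutely_continuous_propagate[OF K P0 P1 ac]
    by (intro chi2_sample_size_lower_bound[OF _ _ _ _ g psi err eps])
  also have "\<dots> \<le> real n * (\<eta> ^ d * \<Delta>2)"
    using chi_d eta_nonneg Delta by (intro mult_left_mono) (auto simp: enn2real_leI)
  finally show ?thesis
    by (simp add: mult.assoc)
qed

lemma delayed_sample_size_lower_bound:
  assumes K: "\<And>j. j \<in> {t..<t + d} \<Longrightarrow> K j \<in> M \<rightarrow>\<^sub>M prob_algebra M"
    and eta: "\<And>j. j \<in> {t..<t + d} \<Longrightarrow> eta_chi2 M (K j) \<le> ennreal \<eta>" and eta_lt: "\<eta> < 1"
    and k: "0 < k" "k \<le> d"
    and P0: "P0 \<in> space (prob_algebra M)" and P1: "P1 \<in> space (prob_algebra M)"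
    and ac: "absolutely_continuous P1 P0" and chi: "chi2 P0 P1 = ennreal \<Delta>2" and Delta: "0 \<le> \<Delta>2"
    and g: "g \<in> M \<rightarrow>\<^sub>M N" and psi: "psi \<in> PiM {..<n} (\<lambda>_. N) \<rightarrow>\<^sub>M count_space UNIV"
    and err: "total_error n (distr (propagate K P0 t d) N g) (distr (propagate K P1 t d) N g) psi \<le> \<epsilon>"
    and eps: "\<epsilon> < 1"
  shows "(1 - \<epsilon>)\<^sup>2 \<le> real n * \<eta> ^ k * \<Delta>2"
proof -
  \<comment> \<open>The hypothesis on \<open>eta_chi2\<close> only sees \<open>ennreal \<eta>\<close>, so a negative \<open>\<eta>\<close> acts as \<open>0\<close>.\<close>
  have "ennreal (max 0 \<eta>) = ennreal \<eta>"
    by (cases "0 \<le> \<eta>") (simp_all add: max_def ennreal_neg)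
  then have "(1 - \<epsilon>)\<^sup>2 \<le> real n * max 0 \<eta> ^ d * \<Delta>2"
    using eta by (intro propagated_sample_size_lower_bound[OF K _ _ P0 P1 ac chi Delta g psi err eps]) auto
  also have "\<dots> \<le> real n * max 0 \<eta> ^ k * \<Delta>2"
    using k eta_lt Delta by (intro mult_right_mono mult_left_mono power_decreasing) auto
  finally have bound: "(1 - \<epsilon>)\<^sup>2 \<le> real n * max 0 \<eta> ^ k * \<Delta>2" .
  have "max 0 \<eta> = \<eta>"
  proof (rule ccontr)
    assume "max 0 \<eta> \<noteq> \<eta>"
    then have "max 0 \<eta> ^ k = 0"
      using k by (simp add: max_def split: if_splits)
    then have "(1 - \<epsilon>)\<^sup>2 \<le> 0"
      using bound by (simp only: mult_zero_right mult_zero_left)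
    then show False
      using eps by (simp add: power2_eq_square mult_le_0_iff)
  qed
  then show ?thesis
    using bound by simp
qed

theorem corollary6:
  fixes M :: "'a measure" and N :: "'b measure"
    and K :: "nat \<Rightarrow> 'a \<Rightarrow> 'a measure" and g :: "nat \<Rightarrow> 'a \<Rightarrow> 'b"
    and H m :: nat and \<eta> \<Delta>2 \<epsilon> :: real
  assumes K_kernel: "\<And>j. j < H \<Longrightarrow> K j \<in> M \<rightarrow>\<^sub>M prob_algebra M"
    and eta: "\<And>j. j < H \<Longrightarrow> eta_chi2 M (K j) \<le> ennreal \<eta>"
    and eta_lt: "\<eta> < 1"
    and m: "m < H"
    and g_meas: "\<And>u. u \<in> schedule H m \<union> {H} \<Longrightarrow> g u \<in> M \<rightarrow>\<^sub>M N"
    and Delta: "0 < \<Delta>2"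
    and eps: "0 < \<epsilon>" "\<epsilon> < 1/2"
  shows "\<exists>t. t < H \<and>
    (\<forall>P0 P1. P0 \<in> space (prob_algebra M) \<longrightarrow> P1 \<in> space (prob_algebra M) \<longrightarrow>
       absolutely_continuous P1 P0 \<longrightarrow> chi2 P0 P1 = ennreal \<Delta>2 \<longrightarrow>
       (\<forall>n psi. psi \<in> PiM {..<n} (\<lambda>_. N) \<rightarrow>\<^sub>M count_space UNIV \<longrightarrow>
          total_error n
            (distr (propagate K P0 t (next_insp H m t - t)) N (g (next_insp H m t)))
            (distr (propagate K P1 t (next_insp H m t - t)) N (g (next_insp H m t))) psi \<le> \<epsilon>
          \<longrightarrow> real n * \<eta> ^ nat \<lceil>real H / real (m + 1)\<rceil> * \<Delta>2 \<ge> (1 - \<epsilon>)\<^sup>2))"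
proof -
  obtain t where t: "t < H" "t < next_insp H m t" "next_insp H m t \<in> schedule H m \<union> {H}"
    and wait: "nat \<lceil>real H / real (m + 1)\<rceil> \<le> next_insp H m t - t"
    using exists_long_wait_for_inspection[OF m] by blast
  have steps: "t + (next_insp H m t - t) \<le> H"
    using t next_insp_le[of H H m t] by simp
  have wait_pos: "0 < nat \<lceil>real H / real (m + 1)\<rceil>"
    using m by simp
  show ?thesis
  proof (intro exI[of _ t] conjI allI impI \<open>t < H\<close>)
    fix P0 P1 n psi
    assume P0: "P0 \<in> space (prob_algebra M)" and P1: "P1 \<in> space (prob_algebra M)"
      and ac: "absolutely_continuous P1 P0" and chi: "chi2 P0 P1 = ennreal \<Delta>2"
      and psi: "psi \<in> PiM {..<n} (\<lambda>_. N) \<rightarrow>\<^sub>M count_space UNIV"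
      and err: "total_error n (distr (propagate K P0 t (next_insp H m t - t)) N (g (next_insp H m t)))
            (distr (propagate K P1 t (next_insp H m t - t)) N (g (next_insp H m t))) psi \<le> \<epsilon>"
    show "real n * \<eta> ^ nat \<lceil>real H / real (m + 1)\<rceil> * \<Delta>2 \<ge> (1 - \<epsilon>)\<^sup>2"
      using steps Delta eps K_kernel eta
      by (intro delayed_sample_size_lower_bound[OF _ _ eta_lt wait_pos wait P0 P1 ac chi _
            g_meas[OF t(3)] psi err]) auto
  qed
qed

end
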